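(* Assume $k=2$, and write $y=y_1$. (1) $r=e-1$ if and only if one of the following holds: (a) $2y\ge c+e$; (b) $2y=(2q+1)e<c+e$ for some integer $q\ge1$, $p\ge2$, and $y\in v(xR:\mathfrak m)$. (2) $r=e-2$ if and only if $2y<c+e$ and, if $2y=(2q+1)e$ for some integer $q$, then $y\notin v(xR:\mathfrak m)$.
   Context: Let $(R,\mathfrak m)$ be a one-dimensional local Noetherian domain with quotient field $K$, not regular, analytically irreducible (the integral closure $\overline R$ of $R$ in $K$ is a DVR and a finite $R$-module) and residually rational. Let $v$ be the valuation of $\overline R$ normalized so a uniformizer $t$ has value 1, $v(R)=\{v(a):a\in R\setminus\{0\}\}$, $\mathfrak C=(R:_K\overline R)=t^c\overline R$ with $c$ the least element of $v(R)$ with $c+\mathbb N\subseteq v(R)$, $r=\ell_R((R:_K\mathfrak m)/R)$, $e$ the least positive element of $v(R)$. Let $x\in\mathfrak m$ with $v(x)=e$, $k=\ell_R(R/(\mathfrak C+xR))$, $(xR:\mathfrak m)=\{a\in K:a\mathfrak m\subseteq xR\}$ (an ideal of $R$) with value set $v(xR:\mathfrak m)$. Let $p$ be the integer with $c-e\le pe<c$. When $k=2$, $y_1$ is the unique $y\in v(R)$ with $0<y<c$ and $y-e\notin v(R)$ (the unique nonzero element of $v(R)\setminus v(\mathfrak C+xR)$). *)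

theory Defs
  imports "HOL-Library.Extended_Nat"
begin

text \<open>The ambient type 'a (a field) plays the role of the quotient field K.\<close>

definition subring :: "'a::field set \<Rightarrow> bool" where
  "subring R \<longleftrightarrow> 0 \<in> R \<and> 1 \<in> R \<and> (\<forall>a\<in>R. \<forall>b\<in>R. a + b \<in> R \<and> a * b \<in> R \<and> - a \<in> R)"

definition submod :: "'a::field set \<Rightarrow> 'a set \<Rightarrow> bool" where
  "submod R M \<longleftrightarrow> 0 \<in> M \<and> (\<forall>a\<in>M. \<forall>b\<in>M. a + b \<in> M) \<and> (\<forall>r\<in>R. \<forall>a\<in>M. r * a \<in> M)"

definition ideal :: "'a::field set \<Rightarrow> 'a set \<Rightarrow> bool" where
  "ideal R I \<longleftrightarrow> I \<subseteq> R \<and> submod R I"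

definition prime_ideal :: "'a::field set \<Rightarrow> 'a set \<Rightarrow> bool" where
  "prime_ideal R P \<longleftrightarrow> ideal R P \<and> P \<noteq> R \<and> (\<forall>a\<in>R. \<forall>b\<in>R. a * b \<in> P \<longrightarrow> a \<in> P \<or> b \<in> P)"

definition lin_comb :: "'a::field set \<Rightarrow> 'a set \<Rightarrow> 'a set" where
  "lin_comb R B = {\<Sum>b\<in>B. f b * b | f. \<forall>b\<in>B. f b \<in> R}"

definition fin_gen :: "'a::field set \<Rightarrow> 'a set \<Rightarrow> bool" where
  "fin_gen R M \<longleftrightarrow> (\<exists>B. finite B \<and> B \<subseteq> M \<and> M = lin_comb R B)"

definition noetherian :: "'a::field set \<Rightarrow> bool" where
  "noetherian R \<longleftrightarrow> (\<forall>I. ideal R I \<longrightarrow> fin_gen R I)"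

definition nonunits :: "'a::field set \<Rightarrow> 'a set" where
  "nonunits R = {a \<in> R. \<not> (\<exists>b\<in>R. a * b = 1)}"

definition local_ring :: "'a::field set \<Rightarrow> bool" where
  "local_ring R \<longleftrightarrow> ideal R (nonunits R)"

text \<open>Krull dimension one (for a local domain): the prime ideals are exactly 0 and m, and m \<noteq> 0.\<close>
definition dim_one :: "'a::field set \<Rightarrow> bool" where
  "dim_one R \<longleftrightarrow> nonunits R \<noteq> {0} \<and> (\<forall>P. prime_ideal R P \<longrightarrow> P = {0} \<or> P = nonunits R)"

text \<open>One-dimensional regular local ring: maximal ideal principal.\<close>
definition regular1 :: "'a::field set \<Rightarrow> bool" where
  "regular1 R \<longleftrightarrow> (\<exists>g\<in>R. nonunits R = {g * a | a. a \<in> R})"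

definition quotient_field_is_K :: "'a::field set \<Rightarrow> bool" where
  "quotient_field_is_K R \<longleftrightarrow> (\<forall>z. \<exists>a\<in>R. \<exists>b\<in>R. b \<noteq> 0 \<and> z = a / b)"

definition integral_over :: "'a::field set \<Rightarrow> 'a \<Rightarrow> bool" where
  "integral_over R a \<longleftrightarrow> (\<exists>n cs. (\<forall>i<n. cs i \<in> R) \<and> a ^ n + (\<Sum>i<n. cs i * a ^ i) = 0)"

text \<open>Normalized discrete valuation on K (values of nonzero elements), with uniformizer of value 1.\<close>
definition normalized_dval :: "('a::field \<Rightarrow> int) \<Rightarrow> bool" where
  "normalized_dval v \<longleftrightarrow>
     (\<forall>a b. a \<noteq> 0 \<longrightarrow> b \<noteq> 0 \<longrightarrow> v (a * b) = v a + v b) \<and>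
     (\<forall>a b. a \<noteq> 0 \<longrightarrow> b \<noteq> 0 \<longrightarrow> a + b \<noteq> 0 \<longrightarrow> v (a + b) \<ge> min (v a) (v b)) \<and>
     (\<exists>t. t \<noteq> 0 \<and> v t = 1)"

definition vring :: "('a::field \<Rightarrow> int) \<Rightarrow> 'a set" where
  "vring v = {a. a = 0 \<or> v a \<ge> 0}"

definition int_closure :: "'a::field set \<Rightarrow> 'a set" where
  "int_closure R = {a. integral_over R a}"

text \<open>Standing hypotheses: R one-dimensional local Noetherian domain with quotient field K,
  not regular, analytically irreducible (integral closure is the DVR of v and a finite
  R-module), residually rational (R/m = residue field of the DVR).\<close>
definition standing :: "'a::field set \<Rightarrow> ('a \<Rightarrow> int) \<Rightarrow> bool" where
  "standing R v \<longleftrightarrow> subring R \<and> quotient_field_is_K R \<and> local_ring R \<and> noetherian R \<and> dim_one R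
     \<and> \<not> regular1 R \<and> normalized_dval v \<and> int_closure R = vring v \<and> fin_gen R (vring v)
     \<and> (\<forall>a\<in>vring v. \<exists>b\<in>R. a - b = 0 \<or> v (a - b) > 0)"

definition vals :: "('a::field \<Rightarrow> int) \<Rightarrow> 'a set \<Rightarrow> int set" where
  "vals v S = {v a | a. a \<in> S \<and> a \<noteq> 0}"

definition cond_c :: "'a::field set \<Rightarrow> ('a \<Rightarrow> int) \<Rightarrow> int" where
  "cond_c R v = (LEAST n. n \<in> vals v R \<and> (\<forall>j\<ge>n. j \<in> vals v R))"

definition mult_e :: "'a::field set \<Rightarrow> ('a \<Rightarrow> int) \<Rightarrow> int" where
  "mult_e R v = (LEAST n. n \<in> vals v R \<and> n > 0)"

definition colon :: "'a::field set \<Rightarrow> 'a set \<Rightarrow> 'a set" where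
  "colon A B = {a. \<forall>b\<in>B. a * b \<in> A}"

definition conductor :: "'a::field set \<Rightarrow> ('a \<Rightarrow> int) \<Rightarrow> 'a set" where
  "conductor R v = colon R (vring v)"

definition principal :: "'a::field set \<Rightarrow> 'a \<Rightarrow> 'a set" where
  "principal R x = {x * a | a. a \<in> R}"

definition setsum :: "'a::field set \<Rightarrow> 'a set \<Rightarrow> 'a set" where
  "setsum A B = {a + b | a b. a \<in> A \<and> b \<in> B}"

text \<open>Length of the R-module M/N (N \<subseteq> M submodules of K): supremum of lengths of strict
  chains of R-submodules from N to M (these correspond to chains of submodules of M/N).\<close>
definition submod_chain :: "'a::field set \<Rightarrow> 'a set \<Rightarrow> 'a set \<Rightarrow> nat \<Rightarrow> bool" where
  "submod_chain R N M n \<longleftrightarrow> (\<exists>f :: nat \<Rightarrow> 'a set. f 0 = N \<and> f n = M \<and>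
      (\<forall>i\<le>n. submod R (f i)) \<and> (\<forall>i<n. f i \<subset> f (Suc i)))"

definition mlength :: "'a::field set \<Rightarrow> 'a set \<Rightarrow> 'a set \<Rightarrow> enat" where
  "mlength R N M = (SUP n \<in> {n. submod_chain R N M n}. enat n)"

end

theory Submission
  imports Defs
begin

text \<open>By residual rationality, if N \<subseteq> M are R-submodules of K and N contains every element
  of value at least c, then the leading term of an element of M can be cancelled by an element
  of N of the same value; hence the length of M/N is the number of values of M that are not
  values of N. For N = C + xR the missing values are the s \<in> v(R), s < c, with s - e \<notin> v(R);
  they include 0 and y, so k = 2 forces the values of R below c to be the numbers j e and y + j e.

  It follows that v(R:m) - v(R) consists of the e - 2 integers of [c - e, c) congruent neither
  to 0 nor to y modulo e, together with y - e when y - e \<in> v(R:m), i.e. when y \<in> v(xR:m).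
  So r is e - 1 or e - 2 according to this condition. If 2y \<ge> c + e, then a/x with v(a) = y
  lies in R:m, because the values of m below c - y + e \<le> y are multiples of e. If 2y < c + e
  and y - e \<in> v(R:m), then 2y - e is a value of R below c, hence a multiple of e, and an
  even one since e does not divide y; so 2y = (2q + 1)e with q \<ge> 1, and c > 2qe \<ge> 2e
  forces p \<ge> 2.\<close>

lemma Least_int_bounded_below:
  fixes P :: "int \<Rightarrow> bool"
  assumes "P n" and bound: "\<And>m. P m \<Longrightarrow> b \<le> m"
  shows "P (Least P) \<and> (\<forall>m. P m \<longrightarrow> Least P \<le> m)"
proof -
  define k where "k = (LEAST k::nat. P (b + int k))"
  have Pk: "P (b + int k)"
    unfolding k_def by (rule LeastI[of _ "nat (n - b)"]) (use assms in auto)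
  have le: "b + int k \<le> m" if "P m" for m
  proof -
    have "k \<le> nat (m - b)" unfolding k_def by (rule Least_le) (use that bound in auto)
    then show ?thesis using bound[OF that] by linarith
  qed
  have "Least P = b + int k" by (rule Least_equality) (use Pk le in auto)
  then show ?thesis using Pk le by auto
qed

lemma card_window_residues:
  fixes e c r :: int
  assumes e: "0 < e" and r: "0 \<le> r" "r < e" "r \<noteq> 0"
  shows "card {g. c - e \<le> g \<and> g < c \<and> g mod e \<noteq> 0 \<and> g mod e \<noteq> r} = nat (e - 2)"
proof -
  let ?A = "{g. c - e \<le> g \<and> g < c \<and> g mod e \<noteq> 0 \<and> g mod e \<noteq> r}"
  let ?B = "{0..<e} - {0, r}"
  have "bij_betw (\<lambda>g. g mod e) ?A ?B"
  proof (rule bij_betwI')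
    fix g1 g2 assume "g1 \<in> ?A" "g2 \<in> ?A"
    then have close: "\<bar>g1 - g2\<bar> < e" by auto
    show "(g1 mod e = g2 mod e) = (g1 = g2)"
    proof
      assume "g1 mod e = g2 mod e"
      then obtain k where k: "g1 - g2 = e * k" by (metis mod_eq_dvd_iff dvdE)
      then have "e * \<bar>k\<bar> < e * 1" using close e by (simp add: abs_mult)
      then have "k = 0" using e by (simp only: mult_less_cancel_left_pos)
      then show "g1 = g2" using k by simp
    qed simp
  next
    fix g assume "g \<in> ?A"
    then show "g mod e \<in> ?B" using e by auto
  next
    fix k assume k: "k \<in> ?B"
    define g where "g = c - e + (k - (c - e)) mod e"
    have "g mod e = k"
      unfolding g_def using k by (simp add: mod_add_right_eq)
    moreover have "c - e \<le> g" "g < c"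
      unfolding g_def using e by (simp_all add: pos_mod_bound)
    ultimately show "\<exists>g\<in>?A. k = g mod e" using k by (intro bexI[of _ g]) auto
  qed
  then have "card ?A = card ?B" by (rule bij_betw_same_card)
  also have "\<dots> = nat e - 2" using r by (subst card_Diff_subset) auto
  finally show ?thesis by simp
qed

locale valued_domain =
  fixes R :: "'a::field set" and v :: "'a \<Rightarrow> int"
  assumes standing: "standing R v"
begin

lemma subring: "subring R"
  and valuation: "normalized_dval v"
  and integral_closure: "int_closure R = vring v"
  and finite_closure: "fin_gen R (vring v)"
  and residually_rational: "\<forall>a\<in>vring v. \<exists>b\<in>R. a - b = 0 \<or> 0 < v (a - b)"
  and quotient_field: "quotient_field_is_K R"
  and local: "local_ring R"
  and not_regular: "\<not> regular1 R"
  using standing unfolding standing_def by auto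

lemma zero_in_R: "0 \<in> R"
  and one_in_R: "1 \<in> R"
  and add_in_R: "a \<in> R \<Longrightarrow> b \<in> R \<Longrightarrow> a + b \<in> R"
  and mult_in_R: "a \<in> R \<Longrightarrow> b \<in> R \<Longrightarrow> a * b \<in> R"
  and uminus_in_R: "a \<in> R \<Longrightarrow> - a \<in> R"
  using subring unfolding subring_def by auto

lemma power_in_R: "a \<in> R \<Longrightarrow> a ^ n \<in> R"
  by (induction n) (auto intro: one_in_R mult_in_R)

lemma sum_in_R: "(\<And>i. i \<in> A \<Longrightarrow> f i \<in> R) \<Longrightarrow> sum f A \<in> R"
  by (induction A rule: infinite_finite_induct) (auto intro: zero_in_R add_in_R)

lemma prod_in_R: "(\<And>i. i \<in> A \<Longrightarrow> f i \<in> R) \<Longrightarrow> prod f A \<in> R"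
  by (induction A rule: infinite_finite_induct) (auto intro: one_in_R mult_in_R)

lemma v_mult: "a \<noteq> 0 \<Longrightarrow> b \<noteq> 0 \<Longrightarrow> v (a * b) = v a + v b"
  and v_add_ge: "a \<noteq> 0 \<Longrightarrow> b \<noteq> 0 \<Longrightarrow> a + b \<noteq> 0 \<Longrightarrow> min (v a) (v b) \<le> v (a + b)"
  using valuation unfolding normalized_dval_def by auto

lemma v_one: "v 1 = 0"
  using v_mult[of 1 1] by simp

lemma v_uminus: "v (- a) = v a"
proof (cases "a = 0")
  case False
  have "v (-1) = 0" using v_mult[of "-1" "-1"] v_one by simp
  then show ?thesis using v_mult[of "-1" a] False by simp
qed simp

lemma v_divide: "a \<noteq> 0 \<Longrightarrow> b \<noteq> 0 \<Longrightarrow> v (a / b) = v a - v b"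
  using v_mult[of "a / b" b] by simp

lemma v_power: "a \<noteq> 0 \<Longrightarrow> v (a ^ n) = int n * v a"
  by (induction n) (auto simp: v_one v_mult algebra_simps)

lemma v_add_strict:
  assumes "a \<noteq> 0" "b \<noteq> 0" "v a < v b"
  shows "a + b \<noteq> 0 \<and> v (a + b) = v a"
proof -
  have ab: "a + b \<noteq> 0"
    using assms v_uminus by (metis add_eq_0_iff less_irrefl)
  have "v a \<le> v (a + b)" using v_add_ge[OF assms(1,2) ab] assms by simp
  moreover have "min (v (a + b)) (v (- b)) \<le> v a"
    using v_add_ge[of "a + b" "- b"] ab assms by simp
  ultimately show ?thesis using ab assms v_uminus by auto
qed

lemma uniformizer_powers: obtains t where "t \<noteq> 0" "\<And>n. v (t ^ n) = int n"
proof -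
  obtain t where "t \<noteq> 0" "v t = 1" using valuation unfolding normalized_dval_def by auto
  then show ?thesis using v_power that by simp
qed

lemma v_nonneg: "a \<in> R \<Longrightarrow> a \<noteq> 0 \<Longrightarrow> 0 \<le> v a"
proof -
  assume "a \<in> R" "a \<noteq> 0"
  have "integral_over R a" unfolding integral_over_def
    by (rule exI[of _ 1], rule exI[of _ "\<lambda>_. - a"]) (use \<open>a \<in> R\<close> uminus_in_R in auto)
  then show ?thesis
    using integral_closure \<open>a \<noteq> 0\<close> unfolding int_closure_def vring_def by auto
qed

lemma inverse_in_R:
  assumes "u \<in> R" "u \<noteq> 0" "v u = 0"
  shows "inverse u \<in> R"
proof -
  define w where "w = inverse u"
  have "w \<in> vring v" using assms v_divide[of 1 u] v_one unfolding w_def vring_def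
    by (simp add: inverse_eq_divide)
  then have "integral_over R w" using integral_closure unfolding int_closure_def by auto
  then obtain n cs where cs: "\<forall>i<n. cs i \<in> R" and eq: "w ^ n + (\<Sum>i<n. cs i * w ^ i) = 0"
    unfolding integral_over_def by auto
  obtain m where n: "n = Suc m" using eq by (cases n) auto
  have wu: "w ^ i * u ^ m = u ^ (m - i)" if "i \<le> m" for i
  proof -
    have "w ^ i * u ^ m = (w * u) ^ i * u ^ (m - i)"
      using that by (simp add: power_mult_distrib power_add[symmetric] mult_ac)
    then show ?thesis using assms unfolding w_def by simp
  qed
  have "0 = (w ^ n + (\<Sum>i<n. cs i * w ^ i)) * u ^ m" using eq by simp
  also have "\<dots> = w + (\<Sum>i<n. cs i * u ^ (m - i))"
    using wu n by (simp add: distrib_right sum_distrib_right mult.assoc)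
  finally have "w = - (\<Sum>i<n. cs i * u ^ (m - i))" by (simp add: eq_neg_iff_add_eq_0)
  moreover have "(\<Sum>i<n. cs i * u ^ (m - i)) \<in> R"
    using cs assms by (auto intro!: sum_in_R mult_in_R power_in_R)
  ultimately show ?thesis unfolding w_def using uminus_in_R by auto
qed

lemma nonunits_eq: "nonunits R = {a \<in> R. a = 0 \<or> 0 < v a}"
proof (intro set_eqI iffI)
  fix a assume a: "a \<in> nonunits R"
  then have aR: "a \<in> R" unfolding nonunits_def by auto
  have "v a \<noteq> 0" if "a \<noteq> 0"
  proof
    assume "v a = 0"
    then have "inverse a \<in> R" using inverse_in_R aR that by auto
    then show False using a that unfolding nonunits_def by auto
  qed
  then show "a \<in> {a \<in> R. a = 0 \<or> 0 < v a}" using v_nonneg aR by force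
next
  fix a assume a: "a \<in> {a \<in> R. a = 0 \<or> 0 < v a}"
  have "a * b \<noteq> 1" if "b \<in> R" for b
  proof
    assume ab: "a * b = 1"
    then have "a \<noteq> 0" "b \<noteq> 0" by auto
    then show False using v_mult[of a b] ab v_one v_nonneg[OF that] a by auto
  qed
  then show "a \<in> nonunits R" using a unfolding nonunits_def by auto
qed

lemma residue_approx:
  assumes "a \<noteq> 0" "b \<noteq> 0" "v a = v b"
  obtains u where "u \<in> R" "b - u * a = 0 \<or> v b < v (b - u * a)"
proof -
  have "b / a \<in> vring v" using assms v_divide unfolding vring_def by auto
  then obtain u where u: "u \<in> R" "b / a - u = 0 \<or> 0 < v (b / a - u)"
    using residually_rational by auto
  have "b - u * a = a * (b / a - u)" using assms by (simp add: field_simps)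
  then have "b - u * a = 0 \<or> v b < v (b - u * a)"
    using u assms v_mult[of a "b / a - u"] by (cases "b / a - u = 0") auto
  then show ?thesis using u that by blast
qed

lemma in_vals_iff: "g \<in> vals v M \<longleftrightarrow> (\<exists>a\<in>M. a \<noteq> 0 \<and> v a = g)"
  unfolding vals_def by auto

abbreviation S :: "int set" where "S \<equiv> vals v R"
abbreviation c :: int where "c \<equiv> cond_c R v"
abbreviation e :: int where "e \<equiv> mult_e R v"

lemma vals_R_nonneg: "s \<in> S \<Longrightarrow> 0 \<le> s"
  using v_nonneg unfolding vals_def by auto

lemma zero_in_vals_R: "0 \<in> S"
  using one_in_R v_one unfolding vals_def by force

lemma vals_R_add:
  assumes "s \<in> S" "s' \<in> S"
  shows "s + s' \<in> S"
proof -
  obtain a a' where "a \<in> R" "a \<noteq> 0" "v a = s" "a' \<in> R" "a' \<noteq> 0" "v a' = s'"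
    using assms unfolding vals_def by auto
  then show ?thesis using mult_in_R v_mult unfolding vals_def by (intro CollectI exI[of _ "a * a'"]) auto
qed

lemma large_values_in_R: obtains n where "\<And>a. a \<noteq> 0 \<Longrightarrow> n \<le> v a \<Longrightarrow> a \<in> R"
proof -
  obtain B where B: "finite B" "vring v = lin_comb R B"
    using finite_closure unfolding fin_gen_def by auto
  have "\<forall>b\<in>B. \<exists>d. d \<in> R \<and> d \<noteq> 0 \<and> d * b \<in> R"
  proof
    fix b
    obtain a d where "a \<in> R" "d \<in> R" "d \<noteq> 0" "b = a / d"
      using quotient_field unfolding quotient_field_is_K_def by blast
    then show "\<exists>d. d \<in> R \<and> d \<noteq> 0 \<and> d * b \<in> R" by (intro exI[of _ d]) simp
  qed
  from bchoice[OF this] obtain d where d: "\<forall>b\<in>B. d b \<in> R \<and> d b \<noteq> 0 \<and> d b * b \<in> R"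
    by blast
  \<comment> \<open>a common denominator of the generators of the valuation ring multiplies it into R\<close>
  define D where "D = (\<Prod>b\<in>B. d b)"
  have D: "D \<in> R" "D \<noteq> 0"
    unfolding D_def using d B(1) by (auto intro: prod_in_R simp: prod_zero_iff)
  have DB: "D * b \<in> R" if "b \<in> B" for b
  proof -
    have "D * b = (\<Prod>b'\<in>B - {b}. d b') * (d b * b)"
      unfolding D_def using B(1) that by (simp add: prod.remove mult_ac)
    moreover have "(\<Prod>b'\<in>B - {b}. d b') * (d b * b) \<in> R"
      by (rule mult_in_R) (use d that in \<open>auto intro: prod_in_R\<close>)
    ultimately show ?thesis by metis
  qed
  show ?thesis
  proof (rule that)
    fix a assume a: "a \<noteq> 0" "v D \<le> v a"
    have "a / D \<in> vring v" using v_divide a D unfolding vring_def by auto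
    then obtain f where f: "\<forall>b\<in>B. f b \<in> R" "a / D = (\<Sum>b\<in>B. f b * b)"
      using B(2) unfolding lin_comb_def by auto
    have "a = D * (a / D)" using D by simp
    also have "\<dots> = (\<Sum>b\<in>B. f b * (D * b))" using f(2) by (simp add: sum_distrib_left mult_ac)
    also have "\<dots> \<in> R" by (rule sum_in_R, rule mult_in_R) (use f DB in auto)
    finally show "a \<in> R" .
  qed
qed

lemma vals_R_cofinite: obtains n where "\<And>j. n \<le> j \<Longrightarrow> j \<in> S"
proof -
  obtain n where n: "\<And>a. a \<noteq> 0 \<Longrightarrow> n \<le> v a \<Longrightarrow> a \<in> R"
    using large_values_in_R by blast
  obtain t where t: "t \<noteq> 0" "\<And>n. v (t ^ n) = int n" using uniformizer_powers by blast
  have "j \<in> S" if "max n 0 \<le> j" for j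
    using n[of "t ^ nat j"] t that unfolding vals_def by (intro CollectI exI[of _ "t ^ nat j"]) auto
  then show ?thesis using that by blast
qed

lemma ge_cond_c_in_vals: "c \<le> j \<Longrightarrow> j \<in> S"
  and cond_c_le: "s \<in> S \<Longrightarrow> \<forall>j\<ge>s. j \<in> S \<Longrightarrow> c \<le> s"
proof -
  obtain n where n: "\<And>j. n \<le> j \<Longrightarrow> j \<in> S" using vals_R_cofinite by blast
  let ?P = "\<lambda>s. s \<in> S \<and> (\<forall>j\<ge>s. j \<in> S)"
  have "?P (Least ?P) \<and> (\<forall>m. ?P m \<longrightarrow> Least ?P \<le> m)"
    by (rule Least_int_bounded_below[of ?P "max n 0" 0]) (use n vals_R_nonneg in auto)
  then have c: "?P c" "\<And>m. ?P m \<Longrightarrow> c \<le> m" unfolding cond_c_def by blast+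
  show "c \<le> j \<Longrightarrow> j \<in> S" using c(1) by blast
  show "s \<in> S \<Longrightarrow> \<forall>j\<ge>s. j \<in> S \<Longrightarrow> c \<le> s" using c(2) by blast
qed

lemma mult_e_pos: "0 < e"
  and mult_e_le: "s \<in> S \<Longrightarrow> 0 < s \<Longrightarrow> e \<le> s"
proof -
  let ?P = "\<lambda>s. s \<in> S \<and> 0 < s"
  have "?P (Least ?P) \<and> (\<forall>m. ?P m \<longrightarrow> Least ?P \<le> m)"
    by (rule Least_int_bounded_below[of ?P "max c 1" 0]) (use ge_cond_c_in_vals in auto)
  then have e: "?P e" "\<And>m. ?P m \<Longrightarrow> e \<le> m" unfolding mult_e_def by blast+
  show "0 < e" using e(1) by blast
  show "s \<in> S \<Longrightarrow> 0 < s \<Longrightarrow> e \<le> s" using e(2) by blast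
qed

lemma submod_UNIV: "submod R UNIV"
  unfolding submod_def by auto

lemma submod_R: "submod R R"
  unfolding submod_def using zero_in_R add_in_R mult_in_R by auto

lemma submod_diff: "submod R M \<Longrightarrow> a \<in> M \<Longrightarrow> b \<in> M \<Longrightarrow> a - b \<in> M"
  unfolding submod_def using uminus_in_R[OF one_in_R]
  by (metis diff_conv_add_uminus mult_minus1)

lemma submod_nonunits: "submod R (nonunits R)"
  using local unfolding local_ring_def ideal_def by auto

lemma submod_scale: "submod R M \<Longrightarrow> submod R ((*) z ` M)"
  unfolding submod_def by (auto simp: image_iff mult.left_commute) (metis distrib_left)

lemma submod_setsum: "submod R A \<Longrightarrow> submod R B \<Longrightarrow> submod R (setsum A B)"
  unfolding submod_def setsum_def
  by (smt (verit, best) add.assoc add.commute add.right_neutral distrib_left mem_Collect_eq)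

lemma setsum_subset: "submod R M \<Longrightarrow> A \<subseteq> M \<Longrightarrow> B \<subseteq> M \<Longrightarrow> setsum A B \<subseteq> M"
  unfolding setsum_def submod_def by blast

lemma subset_setsum_left: "submod R B \<Longrightarrow> A \<subseteq> setsum A B"
  unfolding setsum_def submod_def by force

lemma vals_mono: "A \<subseteq> B \<Longrightarrow> vals v A \<subseteq> vals v B"
  unfolding vals_def by blast

definition val_ge :: "'a set \<Rightarrow> int \<Rightarrow> 'a set" where
  "val_ge M g = {a \<in> M. a = 0 \<or> g \<le> v a}"

lemma submod_val_ge:
  assumes "submod R M"
  shows "submod R (val_ge M g)"
proof -
  have "a + b = 0 \<or> g \<le> v (a + b)" if "a = 0 \<or> g \<le> v a" "b = 0 \<or> g \<le> v b" for a b
    using v_add_ge[of a b] that by fastforce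
  moreover have "r * a = 0 \<or> g \<le> v (r * a)" if "r \<in> R" "a = 0 \<or> g \<le> v a" for r a
    using v_mult[of r a] v_nonneg[of r] that by fastforce
  ultimately show ?thesis
    using assms unfolding submod_def val_ge_def by auto
qed

text \<open>Residual rationality lets one peel off the leading term of an element of B by an
  R-multiple of an element of A of the same value; the value strictly increases until it
  reaches the range n where A contains everything.\<close>
lemma submod_subset_by_vals:
  assumes A: "submod R A" and B: "submod R B"
    and large: "\<And>a. a \<noteq> 0 \<Longrightarrow> n \<le> v a \<Longrightarrow> a \<in> A"
    and vals: "vals v B \<subseteq> vals v (A \<inter> B)"
  shows "B \<subseteq> A"
proof
  fix b assume "b \<in> B"
  then show "b \<in> A"
  proof (induction b rule: measure_induct_rule[where f = "\<lambda>b. nat (n - v b)"])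
    case (less b)
    show ?case
    proof (cases "b = 0 \<or> n \<le> v b")
      case True
      then show ?thesis using large A unfolding submod_def by (cases "b = 0") auto
    next
      case False
      then have b: "b \<noteq> 0" "v b < n" by auto
      have "v b \<in> vals v (A \<inter> B)" using vals less.prems b(1) unfolding vals_def by blast
      then obtain a where a: "a \<in> A" "a \<in> B" "a \<noteq> 0" "v a = v b"
        unfolding vals_def by auto
      obtain u where u: "u \<in> R" "b - u * a = 0 \<or> v b < v (b - u * a)"
        using residue_approx[OF a(3) b(1) a(4)] .
      have ua: "u * a \<in> A" "u * a \<in> B" using A B u a unfolding submod_def by auto
      have "b - u * a \<in> A"
      proof (cases "b - u * a = 0")
        case True
        then show ?thesis using A unfolding submod_def by simp
      next
        case False
        then have "nat (n - v (b - u * a)) < nat (n - v b)" using u b by auto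
        then show ?thesis using less.IH submod_diff[OF B less.prems ua(2)] by blast
      qed
      then have "(b - u * a) + u * a \<in> A" using A ua unfolding submod_def by blast
      then show ?thesis by simp
    qed
  qed
qed

lemma in_R_if_cond_c_le: "a \<noteq> 0 \<Longrightarrow> c \<le> v a \<Longrightarrow> a \<in> R"
proof -
  obtain n where "\<And>a. a \<noteq> 0 \<Longrightarrow> n \<le> v a \<Longrightarrow> a \<in> R"
    using large_values_in_R by blast
  moreover have "vals v (val_ge UNIV c) \<subseteq> vals v (R \<inter> val_ge UNIV c)"
  proof
    fix g assume "g \<in> vals v (val_ge UNIV c)"
    then have "g \<in> S" "c \<le> g" using ge_cond_c_in_vals unfolding vals_def val_ge_def by auto
    then show "g \<in> vals v (R \<inter> val_ge UNIV c)" unfolding vals_def val_ge_def by auto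
  qed
  ultimately have "val_ge UNIV c \<subseteq> R"
    by (intro submod_subset_by_vals submod_R submod_val_ge submod_UNIV)
  then show "a \<noteq> 0 \<Longrightarrow> c \<le> v a \<Longrightarrow> a \<in> R" unfolding val_ge_def by auto
qed

lemma vals_psubset:
  assumes A: "submod R A" and B: "submod R B" and AB: "A \<subset> B"
    and large: "\<And>a. a \<noteq> 0 \<Longrightarrow> n \<le> v a \<Longrightarrow> a \<in> A"
  shows "vals v A \<subset> vals v B"
proof -
  have "\<not> vals v B \<subseteq> vals v A"
    using submod_subset_by_vals[OF A B large] AB Int_absorb2[of A B] by auto
  then show ?thesis using vals_mono AB by blast
qed

lemma submod_chain_length_le:
  assumes chain: "submod_chain R N M k"
    and large: "\<And>a. a \<noteq> 0 \<Longrightarrow> n \<le> v a \<Longrightarrow> a \<in> N"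
    and fin: "finite (vals v M - vals v N)"
  shows "k \<le> card (vals v M - vals v N)"
proof -
  obtain f where f: "f 0 = N" "f k = M" "\<forall>i\<le>k. submod R (f i)" "\<forall>i<k. f i \<subset> f (Suc i)"
    using chain unfolding submod_chain_def by auto
  have mono: "f i \<subseteq> f j" if "i \<le> j" "j \<le> k" for i j
    using that
  proof (induction j)
    case (Suc j)
    show ?case
    proof (cases "i = Suc j")
      case False
      then have "f i \<subseteq> f j" using Suc by simp
      moreover have "f j \<subset> f (Suc j)" using f(4) Suc.prems by simp
      ultimately show ?thesis by blast
    qed simp
  qed simp
  have "i \<le> card (vals v (f i) - vals v N)" if "i \<le> k" for i
    using that
  proof (induction i)
    case (Suc i)
    have "vals v (f i) \<subset> vals v (f (Suc i))"
      using Suc.prems f mono[of 0 i] large by (intro vals_psubset[where n = n]) auto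
    moreover have "vals v N \<subseteq> vals v (f i)" using mono[of 0 i] f(1) Suc.prems vals_mono by auto
    ultimately have "vals v (f i) - vals v N \<subset> vals v (f (Suc i)) - vals v N" by blast
    moreover have "vals v (f (Suc i)) - vals v N \<subseteq> vals v M - vals v N"
      using mono[of "Suc i" k] Suc.prems f(2) vals_mono by blast
    ultimately have "card (vals v (f i) - vals v N) < card (vals v (f (Suc i)) - vals v N)"
      using fin by (meson finite_subset psubset_card_mono)
    then show ?case using Suc by simp
  qed simp
  from this[of k] show ?thesis using f(2) by simp
qed

lemma vals_setsum_val_ge:
  assumes "g' \<in> vals v (setsum N (val_ge M g))" "g' < g"
  shows "g' \<in> vals v N"
proof -
  obtain a b where ab: "a \<in> N" "b \<in> val_ge M g" "a + b \<noteq> 0" "v (a + b) = g'"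
    using assms(1) unfolding vals_def setsum_def by auto
  have "a \<noteq> 0 \<and> v a = g'"
  proof (cases "b = 0")
    case False
    then have "v (a + b) < v (- b)" using ab assms(2) v_uminus unfolding val_ge_def by auto
    then show ?thesis using v_add_strict[of "a + b" "- b"] ab False by auto
  qed (use ab in auto)
  then show ?thesis using ab(1) unfolding vals_def by auto
qed

text \<open>Filtering M by value, one value of vals M - vals N at a time from the top, yields a
  strict chain from N to M.\<close>
lemma submod_chain_card_vals:
  assumes "submod R N" "submod R M" "N \<subseteq> M" "finite G" "G \<noteq> {}" "G \<subseteq> vals v M - vals v N"
  shows "submod_chain R N M (card G)"
  using assms
proof (induction "card G" arbitrary: N G)
  case (Suc k)
  define g where "g = Max G"
  have g: "g \<in> G" "\<And>g'. g' \<in> G \<Longrightarrow> g' \<le> g" unfolding g_def using Suc.prems by auto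
  define N' where "N' = setsum N (val_ge M g)"
  have N': "submod R N'" "N' \<subseteq> M" "N \<subseteq> N'"
    unfolding N'_def using Suc.prems submod_setsum submod_val_ge setsum_subset subset_setsum_left
    by (auto simp: val_ge_def)
  have "g \<in> vals v N'"
  proof -
    have "g \<in> vals v M" using g Suc.prems(6) by blast
    then obtain a where "a \<in> M" "a \<noteq> 0" "v a = g" unfolding vals_def by blast
    moreover have "0 \<in> N" using Suc.prems(1) unfolding submod_def by auto
    ultimately have "0 + a \<in> N'" unfolding N'_def setsum_def val_ge_def by blast
    then show ?thesis using \<open>a \<noteq> 0\<close> \<open>v a = g\<close> unfolding vals_def by force
  qed
  then have NN': "N \<subset> N'" using N' g Suc.prems(6) by auto
  show ?case
  proof (cases "G = {g}")
    case True
    then show ?thesis unfolding submod_chain_def using Suc.prems g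
      by (intro exI[of _ "\<lambda>i. if i = 0 then N else M"]) auto
  next
    case False
    have "G - {g} \<subseteq> vals v M - vals v N'"
      using vals_setsum_val_ge[where N = N and M = M and g = g] g Suc.prems(6)
      unfolding N'_def by fastforce
    then have "submod_chain R N' M k"
      using Suc.hyps Suc.prems N' g False by (metis card_Diff_singleton diff_Suc_1 Diff_eq_empty_iff
          finite_Diff subset_singleton_iff)
    then obtain f where f: "f 0 = N'" "f k = M" "\<forall>i\<le>k. submod R (f i)" "\<forall>i<k. f i \<subset> f (Suc i)"
      unfolding submod_chain_def by auto
    define f' where "f' i = (if i = 0 then N else f (i - 1))" for i
    have "f' i \<subset> f' (Suc i)" if "i < Suc k" for i
      using that f NN' unfolding f'_def by (cases i) auto
    then show ?thesis unfolding submod_chain_def \<open>Suc k = card G\<close>[symmetric]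
      using f Suc.prems(1) by (intro exI[of _ f']) (auto simp: f'_def)
  qed
qed simp

lemma mlength_eq_card_vals:
  assumes N: "submod R N" and M: "submod R M" and NM: "N \<subseteq> M"
    and fin: "finite (vals v M - vals v N)"
    and large: "\<And>a. a \<noteq> 0 \<Longrightarrow> n \<le> v a \<Longrightarrow> a \<in> N"
  shows "mlength R N M = enat (card (vals v M - vals v N))"
proof -
  have "submod_chain R N M (card (vals v M - vals v N))"
  proof (cases "vals v M - vals v N = {}")
    case True
    then have "M = N" using submod_subset_by_vals[OF N M large] NM by (auto simp: Int_absorb2)
    then show ?thesis using True N unfolding submod_chain_def by (intro exI[of _ "\<lambda>_. N"]) auto
  qed (use submod_chain_card_vals assms in auto)
  moreover have "k \<le> card (vals v M - vals v N)" if "submod_chain R N M k" for k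
    using submod_chain_length_le[OF that large fin] .
  ultimately show ?thesis unfolding mlength_def
    by (intro antisym SUP_least SUP_upper) auto
qed

lemma mlength_ge: "submod_chain R N M k \<Longrightarrow> enat k \<le> mlength R N M"
  unfolding mlength_def by (rule SUP_upper) auto

lemma conductor_eq: "conductor R v = {a. a = 0 \<or> c \<le> v a}"
proof (intro set_eqI iffI)
  fix a assume a: "a \<in> conductor R v"
  then have aV: "a * b \<in> R" if "b \<in> vring v" for b
    using that unfolding conductor_def colon_def by auto
  obtain t where t: "t \<noteq> 0" "\<And>n. v (t ^ n) = int n" using uniformizer_powers by blast
  have "c \<le> v a" if "a \<noteq> 0"
  proof (rule cond_c_le)
    have "j \<in> S" if "v a \<le> j" for j
    proof -
      have "a * t ^ nat (j - v a) \<in> R" using aV t unfolding vring_def by simp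
      moreover have "v (a * t ^ nat (j - v a)) = j" using v_mult[of a] t \<open>a \<noteq> 0\<close> that by simp
      ultimately show ?thesis using \<open>a \<noteq> 0\<close> t(1) unfolding in_vals_iff
        by (intro bexI[of _ "a * t ^ nat (j - v a)"]) auto
    qed
    then show "v a \<in> S" "\<forall>j\<ge>v a. j \<in> S" by auto
  qed
  then show "a \<in> {a. a = 0 \<or> c \<le> v a}" by auto
next
  fix a assume a: "a \<in> {a. a = 0 \<or> c \<le> v a}"
  have "a * b \<in> R" if "b \<in> vring v" for b
  proof (cases "a = 0 \<or> b = 0")
    case False
    then show ?thesis
      using a that v_mult[of a b] in_R_if_cond_c_le[of "a * b"] unfolding vring_def by auto
  qed (auto simp: zero_in_R)
  then show "a \<in> conductor R v" unfolding conductor_def colon_def by auto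
qed

lemma conductor_subset_R: "conductor R v \<subseteq> R"
proof
  fix a assume "a \<in> conductor R v"
  moreover have "1 \<in> vring v" using v_one unfolding vring_def by simp
  ultimately show "a \<in> R" unfolding conductor_def colon_def by fastforce
qed

lemma principal_eq_image: "principal R x = (*) x ` R"
  unfolding principal_def by auto

lemma submod_colon: "submod R (colon R M)"
  unfolding submod_def colon_def
  using zero_in_R add_in_R mult_in_R by (auto simp: distrib_right mult.assoc)

lemma vals_colon_principal:
  assumes "x \<noteq> 0"
  shows "g \<in> vals v (colon (principal R x) M) \<longleftrightarrow> g - v x \<in> vals v (colon R M)"
proof -
  have colon_eq: "colon (principal R x) M = (*) x ` colon R M"
  proof (intro set_eqI iffI)
    fix w assume "w \<in> colon (principal R x) M"
    then have "w / x \<in> colon R M" "w = x * (w / x)"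
      unfolding colon_def principal_def using assms by (auto simp: field_simps)
    then show "w \<in> (*) x ` colon R M" by blast
  qed (auto simp: colon_def principal_def mult.assoc)
  show ?thesis
    unfolding colon_eq in_vals_iff using assms v_mult[of x] by (force simp: algebra_simps)
qed

end

locale length_two = valued_domain +
  fixes x :: 'a and y :: int
  assumes x_nonunit: "x \<in> nonunits R" and x_nonzero: "x \<noteq> 0" and v_x: "v x = e"
    and length_two: "mlength R (setsum (conductor R v) (principal R x)) R = 2"
    and y_in_vals: "y \<in> S" and y_pos: "0 < y" and y_less_c: "y < c" and y_gap: "y - e \<notin> S"
begin

abbreviation m :: "'a set" where "m \<equiv> nonunits R"
abbreviation Q :: "'a set" where "Q \<equiv> colon R m"

lemma x_in_R: "x \<in> R"
  using x_nonunit unfolding nonunits_def by auto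

lemma v_x_power: "v (x ^ j) = int j * e"
  using v_power[OF x_nonzero] v_x by simp

lemma multiple_e_in_vals: "int j * e \<in> S"
  using v_x_power power_in_R[OF x_in_R] x_nonzero unfolding in_vals_iff
  by (intro bexI[of _ "x ^ j"]) auto

lemma e_less_y: "e < y"
proof -
  have "y \<noteq> e" using y_gap zero_in_vals_R by auto
  then show ?thesis using mult_e_le[OF y_in_vals y_pos] by simp
qed

lemma vals_conductor_plus_x:
  assumes "s \<in> vals v (setsum (conductor R v) (principal R x))"
  shows "c \<le> s \<or> s - e \<in> S"
proof -
  obtain a r where ar: "a \<in> conductor R v" "r \<in> R" "a + x * r \<noteq> 0" "v (a + x * r) = s"
    using assms unfolding in_vals_iff setsum_def principal_def by auto
  have submod_high: "submod R (val_ge UNIV c)" by (intro submod_val_ge submod_UNIV)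
  have a: "a \<in> val_ge UNIV c" using ar(1) unfolding conductor_eq val_ge_def by auto
  show ?thesis
  proof (cases "x * r \<in> val_ge UNIV c")
    case True
    then have "a + x * r \<in> val_ge UNIV c" using a submod_high unfolding submod_def by blast
    then show ?thesis using ar unfolding val_ge_def by auto
  next
    case False
    then have r: "r \<noteq> 0" "v (x * r) < c" unfolding val_ge_def by auto
    have "v (a + x * r) = v (x * r)"
    proof (cases "a = 0")
      case False
      then show ?thesis using a r x_nonzero v_add_strict[of "x * r" a]
        unfolding val_ge_def by (simp add: add.commute)
    qed simp
    moreover have "v (x * r) = e + v r" using v_mult x_nonzero r v_x by simp
    moreover have "v r \<in> S" using ar(2) r unfolding in_vals_iff by auto
    ultimately show ?thesis using ar by auto
  qed
qed

text \<open>The values 0 and y are both missing from v(C + xR); a third gap would give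
  R/(C + xR) length at least 3.\<close>
lemma unique_gap:
  assumes "s \<in> S" "0 < s" "s < c" "s - e \<notin> S"
  shows "s = y"
proof (rule ccontr)
  assume "s \<noteq> y"
  let ?N = "setsum (conductor R v) (principal R x)"
  have submod_N: "submod R ?N"
    unfolding conductor_def principal_eq_image by (intro submod_setsum submod_colon submod_scale submod_R)
  have "?N \<subseteq> R"
    using conductor_subset_R x_in_R
    by (intro setsum_subset submod_R) (auto simp: principal_def mult_in_R)
  moreover have "{0, y, s} \<subseteq> vals v R - vals v ?N"
    using vals_conductor_plus_x assms y_in_vals zero_in_vals_R y_pos y_less_c y_gap
      e_less_y mult_e_pos vals_R_nonneg by fastforce
  ultimately have "submod_chain R ?N R (card {0, y, s})"
    by (intro submod_chain_card_vals submod_N submod_R) auto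
  moreover have "card {0, y, s} = 3" using \<open>s \<noteq> y\<close> assms(2) y_pos by auto
  ultimately have "enat 3 \<le> 2" using mlength_ge length_two by metis
  then show False by (simp add: numeral_eq_enat)
qed

lemma vals_R_below_cond_c:
  assumes "s \<in> S" "s < c"
  shows "(\<exists>j. s = int j * e) \<or> (\<exists>j. s = y + int j * e)"
  using assms
proof (induction s rule: measure_induct_rule[where f = nat])
  case (less s)
  show ?case
  proof (cases "s - e \<in> S")
    case True
    then have "(\<exists>j. s - e = int j * e) \<or> (\<exists>j. s - e = y + int j * e)"
      using less mult_e_pos vals_R_nonneg[of "s - e"] by auto
    then show ?thesis
    proof (elim disjE exE)
      fix j assume "s - e = int j * e"
      then have "s = int (Suc j) * e" by (simp add: algebra_simps)
      then show ?thesis by blast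
    next
      fix j assume "s - e = y + int j * e"
      then have "s = y + int (Suc j) * e" by (simp add: algebra_simps)
      then show ?thesis by blast
    qed
  next
    case False
    then have "s = 0 \<or> s = y" using unique_gap less.prems vals_R_nonneg by force
    then show ?thesis by (metis add.right_neutral mult_zero_left of_nat_0)
  qed
qed

lemma vals_R_window_iff:
  assumes "y - e < g" "0 \<le> g" "g < c"
  shows "g \<in> S \<longleftrightarrow> g mod e = 0 \<or> g mod e = y mod e"
proof
  assume "g \<in> S"
  then show "g mod e = 0 \<or> g mod e = y mod e"
    using vals_R_below_cond_c[OF _ assms(3)] by auto
next
  assume "g mod e = 0 \<or> g mod e = y mod e"
  then show "g \<in> S"
  proof
    assume "g mod e = 0"
    then have "g = int (nat (g div e)) * e"
      using assms(2) mult_e_pos div_mult_mod_eq[of g e] by (simp add: pos_imp_zdiv_nonneg_iff)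
    then show ?thesis using multiple_e_in_vals by metis
  next
    assume "g mod e = y mod e"
    then obtain k where k: "g - y = e * k" by (metis mod_eq_dvd_iff dvdE)
    then have "e * (- 1) < e * k" using assms(1) by simp
    then have "0 \<le> k" using mult_e_pos by (simp only: mult_less_cancel_left_pos)
    then have "g = y + int (nat k) * e" using k by (simp add: algebra_simps)
    then show ?thesis using vals_R_add[OF y_in_vals multiple_e_in_vals] by metis
  qed
qed

lemma y_mod_e: "y mod e \<noteq> 0"
proof
  assume "y mod e = 0"
  then obtain k where k: "y = e * k" by auto
  then have "0 < k" using y_pos mult_e_pos by (simp add: zero_less_mult_iff)
  then have "y - e = int (nat (k - 1)) * e" using k by (simp add: algebra_simps)
  then show False using y_gap multiple_e_in_vals by metis
qed

lemma e_ge_2: "2 \<le> e"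
  using y_mod_e mult_e_pos by (cases "e = 1") auto

lemma vals_colon_m_plus_e:
  assumes "z \<in> Q" "z \<noteq> 0"
  shows "v z + e \<in> S"
proof -
  have "z * x \<in> R" using assms x_nonunit unfolding colon_def by auto
  then show ?thesis
    using assms x_nonzero v_mult[of z x] v_x unfolding in_vals_iff by (intro bexI[of _ "z * x"]) auto
qed

text \<open>Otherwise z x is a unit of R and m = xR, so that R would be regular.\<close>
lemma vals_colon_m_ne:
  assumes z: "z \<in> Q" "z \<noteq> 0"
  shows "v z \<noteq> - e"
proof
  assume vz: "v z = - e"
  define u where "u = z * x"
  have u: "u \<in> R" "u \<noteq> 0" "v u = 0"
    using z x_nonunit x_nonzero v_mult[of z x] vz v_x unfolding u_def colon_def by auto
  have "m = {x * a | a. a \<in> R}"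
  proof (intro set_eqI iffI)
    fix b assume b: "b \<in> m"
    then have "z * b * inverse u \<in> R"
      using z u inverse_in_R unfolding colon_def by (auto intro: mult_in_R)
    moreover have "b = x * (z * b * inverse u)" using u z x_nonzero unfolding u_def by (simp add: field_simps)
    ultimately show "b \<in> {x * a | a. a \<in> R}" by blast
  next
    fix w assume "w \<in> {x * a | a. a \<in> R}"
    then obtain a where "w = x * a" "a \<in> R" by auto
    then show "w \<in> m"
      using x_in_R x_nonzero v_mult[of x a] v_x mult_e_pos v_nonneg[of a]
      unfolding nonunits_eq by (cases "a = 0") (auto intro: mult_in_R)
  qed
  then show False using not_regular x_in_R unfolding regular1_def by blast
qed

definition window :: "int set" where
  "window = {g. c - e \<le> g \<and> g < c \<and> g mod e \<noteq> 0 \<and> g mod e \<noteq> y mod e}"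

lemma window_subset_vals_colon_m: "window \<subseteq> vals v Q - S"
proof
  fix g assume "g \<in> window"
  then have g: "c - e \<le> g" "g < c" "g mod e \<noteq> 0" "g mod e \<noteq> y mod e"
    unfolding window_def by auto
  have "0 \<le> g" "y - e < g" using g e_less_y y_less_c by auto
  then have "g \<notin> S" using vals_R_window_iff g by auto
  obtain t where t: "t \<noteq> 0" "\<And>n. v (t ^ n) = int n" using uniformizer_powers by blast
  have "t ^ nat g * b \<in> R" if "b \<in> m" for b
  proof (cases "b = 0")
    case False
    then have "e \<le> v b" using that mult_e_le unfolding nonunits_eq in_vals_iff by auto
    then show ?thesis
      using in_R_if_cond_c_le[of "t ^ nat g * b"] v_mult[of "t ^ nat g" b] t \<open>0 \<le> g\<close> g False
      by simp
  qed (simp add: zero_in_R)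
  then have "t ^ nat g \<in> Q" unfolding colon_def by auto
  then have "g \<in> vals v Q" using t \<open>0 \<le> g\<close> unfolding in_vals_iff by (intro bexI[of _ "t ^ nat g"]) auto
  then show "g \<in> vals v Q - S" using \<open>g \<notin> S\<close> by blast
qed

lemma vals_colon_m_subset_window: "vals v Q - S \<subseteq> window \<union> {y - e}"
proof
  fix g assume "g \<in> vals v Q - S"
  then have "g \<in> vals v Q" "g \<notin> S" by auto
  then obtain z where z: "z \<in> Q" "z \<noteq> 0" "v z = g" unfolding in_vals_iff by auto
  have ge: "g + e \<in> S" "0 < g + e"
    using vals_colon_m_plus_e[OF z(1,2)] vals_colon_m_ne[OF z(1,2)] vals_R_nonneg z(3) by force+
  show "g \<in> window \<union> {y - e}"
  proof (cases "c \<le> g + e")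
    case True
    have "g < c" using \<open>g \<notin> S\<close> ge_cond_c_in_vals by (meson not_le)
    moreover have "y - e < g" "0 \<le> g" using True y_less_c e_less_y by auto
    ultimately show ?thesis using vals_R_window_iff \<open>g \<notin> S\<close> True unfolding window_def by auto
  next
    case False
    then consider j where "g + e = int j * e" | j where "g + e = y + int j * e"
      using vals_R_below_cond_c[OF ge(1)] by force
    then show ?thesis
    proof cases
      case (1 j)
      then have "g = int (j - 1) * e" using ge(2) by (cases j) (auto simp: algebra_simps)
      then show ?thesis using \<open>g \<notin> S\<close> multiple_e_in_vals by auto
    next
      case (2 j)
      show ?thesis
      proof (cases j)
        case (Suc i)
        then have "g = y + int i * e" using 2 by (simp add: algebra_simps)
        then show ?thesis using \<open>g \<notin> S\<close> vals_R_add[OF y_in_vals multiple_e_in_vals] by auto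
      qed (use 2 in simp)
    qed
  qed
qed

lemma length_colon_m:
  "mlength R R Q = enat (nat (e - 2) + (if y - e \<in> vals v Q then 1 else 0))"
proof -
  have diff_eq: "vals v Q - S = window \<union> ({y - e} \<inter> vals v Q)"
    using window_subset_vals_colon_m vals_colon_m_subset_window y_gap by auto
  have "finite window" unfolding window_def by (rule finite_subset[of _ "{c - e..<c}"]) auto
  moreover have "y - e \<notin> window" unfolding window_def by simp
  moreover have "card window = nat (e - 2)"
    unfolding window_def using mult_e_pos y_mod_e by (intro card_window_residues) auto
  moreover have "R \<subseteq> Q" using mult_in_R unfolding colon_def nonunits_def by auto
  ultimately show ?thesis
    using mlength_eq_card_vals[OF submod_R submod_colon _ _ in_R_if_cond_c_le, of m] diff_eq
    by (auto simp: card_insert_if)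
qed

text \<open>Multiplication by z = a / x with v a = y: values of z m below c are realised inside R by
  the elements z x^j, because the values of R below c - y + e \<le> y are multiples of e.\<close>
lemma y_minus_e_in_vals_colon_m:
  assumes large: "c + e \<le> 2 * y"
  shows "y - e \<in> vals v Q"
proof -
  obtain a where a: "a \<in> R" "a \<noteq> 0" "v a = y" using y_in_vals unfolding in_vals_iff by auto
  define z where "z = a / x"
  have z: "z \<noteq> 0" "v z = y - e" using a x_nonzero v_x v_divide unfolding z_def by auto
  have "vals v ((*) z ` m) \<subseteq> vals v (R \<inter> (*) z ` m)"
  proof
    fix g assume "g \<in> vals v ((*) z ` m)"
    then obtain b where b: "b \<in> m" "b \<noteq> 0" "v (z * b) = g" unfolding in_vals_iff by auto
    have vb: "0 < v b" "v b \<in> S" "g = y - e + v b"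
      using b z v_mult[of z b] unfolding nonunits_eq in_vals_iff by auto
    show "g \<in> vals v (R \<inter> (*) z ` m)"
    proof (cases "c \<le> g")
      case True
      then have "z * b \<in> R" using in_R_if_cond_c_le b z by simp
      then show ?thesis using b z unfolding in_vals_iff by (intro bexI[of _ "z * b"]) auto
    next
      case False
      then have below: "v b < c" "v b < y" using large vb e_less_y y_less_c by linarith+
      moreover have "y \<le> y + int j * e" for j using mult_e_pos by simp
      ultimately obtain j where j: "v b = int j * e"
        using vals_R_below_cond_c[OF vb(2) below(1)] by (metis not_le)
      then obtain i where i: "j = Suc i" using vb(1) by (cases j) auto
      have xj: "x ^ j \<in> m"
        using power_in_R[OF x_in_R, of j] v_x_power[of j] mult_e_pos i unfolding nonunits_eq by auto
      have "z * x ^ j = a * x ^ i" unfolding z_def i using x_nonzero by simp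
      then have "z * x ^ j \<in> R" using a x_in_R by (auto intro: mult_in_R power_in_R)
      then have "z * x ^ j \<in> R \<inter> (*) z ` m" using xj by blast
      moreover have "z * x ^ j \<noteq> 0" "v (z * x ^ j) = g"
        using z vb j v_mult[of z "x ^ j"] v_x_power x_nonzero by simp_all
      ultimately show ?thesis unfolding in_vals_iff by blast
    qed
  qed
  then have "(*) z ` m \<subseteq> R"
    by (intro submod_subset_by_vals[OF submod_R submod_scale[OF submod_nonunits] in_R_if_cond_c_le])
  then have "z \<in> Q" unfolding colon_def by auto
  then show ?thesis using z unfolding in_vals_iff by auto
qed

lemma odd_multiple_if_y_minus_e_in_vals_colon_m:
  assumes small: "2 * y < c + e" and "y - e \<in> vals v Q"
  shows "\<exists>q\<ge>1. 2 * y = (2 * q + 1) * e"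
proof -
  obtain z where z: "z \<in> Q" "z \<noteq> 0" "v z = y - e" using assms(2) unfolding in_vals_iff by auto
  obtain a where a: "a \<in> R" "a \<noteq> 0" "v a = y" using y_in_vals unfolding in_vals_iff by auto
  have "z * a \<in> R" using z a y_pos unfolding colon_def nonunits_eq by auto
  then have "2 * y - e \<in> S" using z a v_mult[of z a] unfolding in_vals_iff by (intro bexI) auto
  then consider j where "2 * y - e = int j * e" | j where "2 * y - e = y + int j * e"
    using vals_R_below_cond_c small by force
  then obtain j where j: "2 * y = (int j + 1) * e"
  proof cases
    case (1 j)
    then show ?thesis by (intro that[of j]) (simp add: algebra_simps)
  next
    case (2 j)
    then have "y - e = int j * e" by simp
    then show ?thesis using y_gap multiple_e_in_vals by metis
  qed
  have "odd (int j + 1)"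
  proof
    assume "even (int j + 1)"
    then obtain i where "int j + 1 = 2 * i" by (elim evenE)
    then have "y = i * e" using j by simp
    then show False using y_mod_e by simp
  qed
  then obtain q where q: "int j = 2 * q" by (auto elim: oddE)
  then have "2 * y = (2 * q + 1) * e" using j by simp
  moreover have "q \<noteq> 0" using calculation e_less_y y_pos by auto
  ultimately show ?thesis using q by (intro exI[of _ q]) auto
qed

end

theorem proposition1p12:
  fixes R :: "'a::field set" and v :: "'a \<Rightarrow> int" and x :: 'a
    and y p :: int
  assumes "standing R v"
    and "x \<in> nonunits R" and "x \<noteq> 0" and "v x = mult_e R v"
    and "mlength R (setsum (conductor R v) (principal R x)) R = 2"
    and "y \<in> vals v R" and "0 < y" and "y < cond_c R v"
    and "y - mult_e R v \<notin> vals v R"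
    and "cond_c R v - mult_e R v \<le> p * mult_e R v" and "p * mult_e R v < cond_c R v"
  shows "(mlength R R (colon R (nonunits R)) = enat (nat (mult_e R v - 1)) \<longleftrightarrow>
            2 * y \<ge> cond_c R v + mult_e R v
          \<or> (\<exists>q::int. q \<ge> 1 \<and> 2 * y = (2 * q + 1) * mult_e R v \<and> 2 * y < cond_c R v + mult_e R v
                \<and> p \<ge> 2 \<and> y \<in> vals v (colon (principal R x) (nonunits R))))
       \<and> (mlength R R (colon R (nonunits R)) = enat (nat (mult_e R v - 2)) \<longleftrightarrow>
            2 * y < cond_c R v + mult_e R v
          \<and> (\<forall>q::int. 2 * y = (2 * q + 1) * mult_e R v \<longrightarrow> y \<notin> vals v (colon (principal R x) (nonunits R))))"
proof -
  interpret length_two R v x y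
    using assms(1-9) by unfold_locales
  let ?ye = "y - e \<in> vals v Q"
  have colon: "y \<in> vals v (colon (principal R x) m) \<longleftrightarrow> ?ye"
    using vals_colon_principal[OF x_nonzero] v_x by simp
  have lengths: "mlength R R Q = enat (nat (e - 1)) \<longleftrightarrow> ?ye"
    "mlength R R Q = enat (nat (e - 2)) \<longleftrightarrow> \<not> ?ye"
    using length_colon_m e_ge_2 by (auto simp: nat_diff_distrib)
  have p: "2 \<le> p" if "1 \<le> q" "2 * y = (2 * q + 1) * e" "2 * y < c + e" for q
  proof -
    have "2 * e \<le> 2 * q * e" using that(1) mult_e_pos by simp
    then have "e * 1 < e * p" using that(2,3) assms(10) by (simp add: algebra_simps)
    then show ?thesis using mult_e_pos by (simp only: mult_less_cancel_left_pos)
  qed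
  have "?ye \<longleftrightarrow> c + e \<le> 2 * y
      \<or> (\<exists>q\<ge>1. 2 * y = (2 * q + 1) * e \<and> 2 * y < c + e \<and> 2 \<le> p \<and> ?ye)"
    using y_minus_e_in_vals_colon_m odd_multiple_if_y_minus_e_in_vals_colon_m p
    by (cases "c + e \<le> 2 * y") auto
  then show ?thesis
    using lengths colon by auto
qed

end
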